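(* Let $p$ be prime, $\mathbb{F}=\mathbb{F}_p$, $K\ge1$, and let $y_{i,j}\in\mathbb{F}^N$ for $i=1,\dots,p-1$, $j=1,\dots,K$. Let $M=\{x\in\mathbb{F}^N:\ \langle x^i,y_{i,j}\rangle=0\text{ for all }i,j\}$. Let $f:\mathbb{F}^N\to\mathbb{F}$ be constant on $M$. Then $$\|f\|_{U^p}\ge\Big(\frac{|M|}{p^N}\Big)^2.$$
   Context: $x^i$ denotes the vector whose coordinates are the $i$-th powers of the coordinates of $x$, and $\langle u,v\rangle=\sum_{t=1}^Nu(t)v(t)$. For $f:\mathbb{F}^N\to\mathbb{F}$, $f_y(x)=f(x+y)-f(x)$, iterated derivatives $f_{y_1\dots y_k}=(f_{y_1\dots y_{k-1}})_{y_k}$, $e(a)=e^{2\pi ia/p}$, and $\|f\|_{U^k}=\big(\mathbb{E}_{x,y_1,\dots,y_k}e(f_{y_1\dots y_k}(x))\big)^{1/2^k}$. *)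

theory Defs
  imports "HOL-Analysis.Analysis" "Berlekamp_Zassenhaus.Finite_Field"
begin

text \<open>Vectors in F_p^N are modelled as 'p mod_ring ^ 'n, with p = CARD('p) prime
  and N = CARD('n).\<close>

definition vpow :: "'p::prime_card mod_ring ^ 'n \<Rightarrow> nat \<Rightarrow> 'p mod_ring ^ 'n" where
  "vpow x i = (\<chi> t. (x $ t) ^ i)"

definition vinner :: "'p::prime_card mod_ring ^ 'n \<Rightarrow> 'p mod_ring ^ 'n \<Rightarrow> 'p mod_ring" where
  "vinner u v = (\<Sum>t\<in>UNIV. u $ t * v $ t)"

definition echar :: "'p::prime_card mod_ring \<Rightarrow> complex" where
  "echar a = exp (2 * of_real pi * \<i> * of_int (to_int_mod_ring a) / of_nat CARD('p))"

fun gderiv :: "('v::ab_group_add \<Rightarrow> 'b::ab_group_add) \<Rightarrow> 'v list \<Rightarrow> 'v \<Rightarrow> 'b" where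
  "gderiv f [] = f"
| "gderiv f (y # ys) = gderiv (\<lambda>x. f (x + y) - f x) ys"

definition gowers_avg :: "nat \<Rightarrow> ('p::prime_card mod_ring ^ 'n::finite \<Rightarrow> 'p mod_ring) \<Rightarrow> complex" where
  "gowers_avg k f =
     (\<Sum>x\<in>UNIV. \<Sum>ys\<in>{ys. length ys = k}. echar (gderiv f ys x))
       / of_nat (CARD('p mod_ring ^ 'n) ^ (k + 1))"

definition gowers_norm :: "nat \<Rightarrow> ('p::prime_card mod_ring ^ 'n::finite \<Rightarrow> 'p mod_ring) \<Rightarrow> real" where
  "gowers_norm k f = (Re (gowers_avg k f)) powr (1 / 2 ^ k)"

end

theory Submission imports Defs begin

text \<open>For every choice of coefficients a, the phase \<open>\<psi>\<^sub>a(x) = \<Sum> a\<^sub>i\<^sub>j \<langle>x\<^sup>i, y\<^sub>i\<^sub>j\<rangle>\<close>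
  has degree at most p - 1, so its p-th derivatives vanish and adding it to f does not change
  \<open>\<parallel>f\<parallel>\<^sub>U\<^sub>p\<close>. Averaging \<open>e(f + \<psi>\<^sub>a)\<close> over all a kills every x outside M by orthogonality of
  characters, and on M, where f is constant, leaves \<open>|M|\<close> times a unimodular constant; hence some
  a has \<open>|\<Sum>\<^sub>x e(f(x) + \<psi>\<^sub>a(x))| \<ge> |M|\<close>. Finally, iterating Cauchy-Schwarz bounds every Gowers
  norm from below by the bias \<open>|\<bbbE>\<^sub>x e(g(x))|\<close>, which for \<open>g = f + \<psi>\<^sub>a\<close> is at least the
  density of M, and the density is at least its square.\<close>

definition exp_frac :: "nat \<Rightarrow> int \<Rightarrow> complex" where
  "exp_frac p n = exp (2 * of_real pi * \<i> * of_int n / of_nat p)"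

lemma exp_frac_add: "exp_frac p (a + b) = exp_frac p a * exp_frac p b"
  unfolding exp_frac_def by (simp add: exp_add[symmetric] add_divide_distrib algebra_simps)

lemma exp_frac_mod:
  assumes "p > 0"
  shows "exp_frac p (n mod int p) = exp_frac p n"
proof -
  have "exp_frac p (int p * (n div int p)) = 1"
    unfolding exp_frac_def using assms
    by (simp add: field_simps) (metis exp_2pi_1_int mult.commute mult.left_commute)
  moreover have "exp_frac p n = exp_frac p (n mod int p) * exp_frac p (int p * (n div int p))"
    by (metis exp_frac_add mod_mult_div_eq)
  ultimately show ?thesis by simp
qed

lemma exp_frac_neq_1:
  assumes "0 < n" "n < int p"
  shows "exp_frac p n \<noteq> 1"
proof
  assume "exp_frac p n = 1"
  then obtain k :: int where "2 * pi * n / p = 2 * k * pi"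
    unfolding exp_frac_def exp_eq_1 by auto
  then have "real_of_int n = real p * k"
    using assms pi_gt_zero by (simp add: field_simps)
  then have "n = int p * k"
    by (metis of_int_eq_iff of_int_mult of_int_of_nat_eq)
  with assms have "0 < k"
    by (simp add: zero_less_mult_iff)
  then have "int p \<le> int p * k"
    using mult_left_mono[of 1 k "int p"] by simp
  with assms \<open>n = int p * k\<close> show False
    by linarith
qed

lemma echar_eq_exp_frac:
  "echar (a :: 'p::prime_card mod_ring) = exp_frac CARD('p) (to_int_mod_ring a)"
  unfolding echar_def exp_frac_def by simp

lemma echar_add: "echar (a + b :: 'p::prime_card mod_ring) = echar a * echar b"
  unfolding echar_eq_exp_frac to_int_mod_ring_add by (simp add: exp_frac_mod exp_frac_add)

lemma echar_0 [simp]: "echar (0 :: 'p::prime_card mod_ring) = 1"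
  unfolding echar_eq_exp_frac by (simp add: exp_frac_def)

lemma norm_echar [simp]: "norm (echar a) = 1"
  unfolding echar_def by (simp add: norm_exp_eq_Re)

lemma echar_diff: "echar (a - b :: 'p::prime_card mod_ring) = echar a * cnj (echar b)"
proof -
  have "echar b * cnj (echar b) = 1"
    using norm_echar[of b] by (metis complex_norm_square of_real_1 power_one)
  moreover have "echar a = echar (a - b) * echar b"
    by (metis diff_add_cancel echar_add)
  ultimately show ?thesis
    by (metis mult.assoc mult.right_neutral)
qed

lemma echar_sum:
  "finite I \<Longrightarrow> echar (\<Sum>q\<in>I. h q :: 'p::prime_card mod_ring) = (\<Prod>q\<in>I. echar (h q))"
  by (induction I rule: finite_induct) (auto simp: echar_add)

lemma echar_neq_1:
  assumes "t \<noteq> (0 :: 'p::prime_card mod_ring)"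
  shows "echar t \<noteq> 1"
proof -
  have "to_int_mod_ring t \<noteq> 0"
    using assms by (metis to_int_mod_ring_hom.hom_zero to_int_mod_ring_hom.injectivity)
  moreover have "to_int_mod_ring t \<in> {0..<int CARD('p)}"
    using range_to_int_mod_ring by blast
  ultimately have "0 < to_int_mod_ring t" "to_int_mod_ring t < int CARD('p)"
    by (metis atLeastLessThan_iff order_le_neq_trans)+
  then show ?thesis
    unfolding echar_eq_exp_frac by (rule exp_frac_neq_1)
qed

lemma sum_echar_mult:
  "(\<Sum>b\<in>UNIV. echar (b * t :: 'p::prime_card mod_ring)) = (if t = 0 then of_nat CARD('p) else 0)"
proof (cases "t = 0")
  case False
  define S where "S = (\<Sum>b\<in>UNIV. echar (b * t))"
  have "echar t * S = (\<Sum>b\<in>UNIV. echar ((b + 1) * t))"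
    unfolding S_def sum_distrib_left by (simp add: echar_add[symmetric] algebra_simps)
  also have "\<dots> = S"
    unfolding S_def by (rule sum.reindex_bij_witness[of _ "\<lambda>b. b - 1" "\<lambda>b. b + 1"]) auto
  finally have "(echar t - 1) * S = 0"
    by (simp add: algebra_simps)
  with echar_neq_1[OF False] show ?thesis
    using False S_def by simp
qed simp

lemma sum_echar_linear_combination:
  fixes T :: "'q \<Rightarrow> 'x \<Rightarrow> 'p::prime_card mod_ring"
  assumes "finite I"
  shows "(\<Sum>a\<in>PiE I (\<lambda>_. UNIV). echar (\<Sum>q\<in>I. a q * T q x)) =
         (if \<forall>q\<in>I. T q x = 0 then of_nat (CARD('p) ^ card I) else 0)"
proof -
  have "(\<Sum>a\<in>PiE I (\<lambda>_. UNIV). echar (\<Sum>q\<in>I. a q * T q x)) =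
        (\<Prod>q\<in>I. \<Sum>b\<in>UNIV. echar (b * T q x))"
    using assms by (simp add: echar_sum prod_sum_PiE)
  also have "\<dots> = (\<Prod>q\<in>I. if T q x = 0 then of_nat CARD('p) else 0)"
    unfolding sum_echar_mult ..
  also have "\<dots> = (if \<forall>q\<in>I. T q x = 0 then of_nat (CARD('p) ^ card I) else 0)"
    using assms by (auto intro: prod_zero)
  finally show ?thesis .
qed

definition char_sum :: "('x::finite \<Rightarrow> 'p::prime_card mod_ring) \<Rightarrow> complex" where
  "char_sum h = (\<Sum>x\<in>UNIV. echar (h x))"

lemma exists_twisted_char_sum_ge:
  fixes T :: "'q \<Rightarrow> 'x::finite \<Rightarrow> 'p::prime_card mod_ring"
  assumes "finite I" and const: "\<And>x. \<forall>q\<in>I. T q x = 0 \<Longrightarrow> f x = c"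
  shows "\<exists>a. real (card {x. \<forall>q\<in>I. T q x = 0}) \<le> cmod (char_sum (\<lambda>x. f x + (\<Sum>q\<in>I. a q * T q x)))"
proof (rule ccontr)
  define Z where "Z = {x. \<forall>q\<in>I. T q x = 0}"
  define A where "A = PiE I (\<lambda>_. UNIV :: 'p mod_ring set)"
  define S where "S a = char_sum (\<lambda>x. f x + (\<Sum>q\<in>I. a q * T q x))" for a
  assume "\<not> ?thesis"
  then have small: "cmod (S a) < real (card Z)" for a
    unfolding S_def Z_def by (auto simp: not_le)
  have "(\<Sum>a\<in>A. S a) = (\<Sum>x\<in>UNIV. echar (f x) * (\<Sum>a\<in>A. echar (\<Sum>q\<in>I. a q * T q x)))"
    unfolding S_def char_sum_def by (subst sum.swap) (simp add: echar_add sum_distrib_left)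
  also have "\<dots> = (\<Sum>x\<in>UNIV. if x \<in> Z then echar c * of_nat (CARD('p) ^ card I) else 0)"
    unfolding A_def sum_echar_linear_combination[OF \<open>finite I\<close>] Z_def
    by (intro sum.cong) (auto simp: const)
  also have "\<dots> = (\<Sum>x\<in>Z. echar c * of_nat (CARD('p) ^ card I))"
    by (simp add: sum.If_cases)
  finally have "cmod (\<Sum>a\<in>A. S a) = real (card Z) * real (card A)"
    using \<open>finite I\<close> by (simp add: A_def card_PiE norm_mult norm_power)
  also have "\<dots> = (\<Sum>a\<in>A. real (card Z))"
    by simp
  also have "\<dots> > (\<Sum>a\<in>A. cmod (S a))"
    using \<open>finite I\<close> small by (intro sum_strict_mono) (auto simp: A_def PiE_eq_empty_iff finite_PiE)
  finally show False
    using norm_sum[of S A] by simp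
qed

lemma gderiv_add: "gderiv (\<lambda>x. g x + h x) ys = (\<lambda>x. gderiv g ys x + gderiv h ys x)"
proof (induction ys arbitrary: g h)
  case (Cons y ys)
  show ?case
    using Cons[of "\<lambda>x. g (x + y) - g x" "\<lambda>x. h (x + y) - h x"] by (simp add: algebra_simps)
qed simp

lemma gderiv_sum: "gderiv (\<lambda>x. \<Sum>i\<in>I. g i x) ys = (\<lambda>x. \<Sum>i\<in>I. gderiv (g i) ys x)"
proof (induction ys arbitrary: g)
  case (Cons y ys)
  show ?case
    using Cons[of "\<lambda>i x. g i (x + y) - g i x"] by (simp add: sum_subtractf)
qed simp

lemma gderiv_cmult: "gderiv (\<lambda>x. c * g x) ys = (\<lambda>x. c * gderiv g ys x :: 'b::comm_ring)"
proof (induction ys arbitrary: g)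
  case (Cons y ys)
  show ?case
    using Cons[of "\<lambda>x. g (x + y) - g x"] by (simp add: algebra_simps)
qed simp

lemma gderiv_append: "gderiv g (ys @ zs) = gderiv (gderiv g ys) zs"
  by (induction ys arbitrary: g) auto

definition gdegree_le :: "nat \<Rightarrow> ('v::ab_group_add \<Rightarrow> 'b::ab_group_add) \<Rightarrow> bool" where
  "gdegree_le d g \<longleftrightarrow> (\<forall>ys. d < length ys \<longrightarrow> gderiv g ys = (\<lambda>x. 0))"

lemma gdegree_le_mono: "gdegree_le d g \<Longrightarrow> d \<le> e \<Longrightarrow> gdegree_le e g"
  unfolding gdegree_le_def by auto

lemma gdegree_le_sum:
  "(\<And>i. i \<in> I \<Longrightarrow> gdegree_le d (g i)) \<Longrightarrow> gdegree_le d (\<lambda>x. \<Sum>i\<in>I. g i x)"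
  unfolding gdegree_le_def gderiv_sum by auto

lemma gdegree_le_cmult: "gdegree_le d g \<Longrightarrow> gdegree_le d (\<lambda>x. c * g x :: 'b::comm_ring)"
  unfolding gdegree_le_def gderiv_cmult by auto

lemma gdegree_le_coordinate_power: "gdegree_le m (\<lambda>x::'a::comm_ring_1^'n. (x $ t) ^ m)"
proof (induction m rule: less_induct)
  case (less m)
  show ?case
    unfolding gdegree_le_def
  proof (intro allI impI)
    fix ys :: "('a^'n) list"
    assume len: "m < length ys"
    then obtain z zs where ys: "ys = z # zs"
      by (cases ys) auto
    define b where "b k = of_nat (m choose k) * (z $ t) ^ (m - k)" for k
    have "(x $ t + z $ t) ^ m - (x $ t) ^ m = (\<Sum>k<m. b k * (x $ t) ^ k)" for x :: "'a^'n"
      by (simp add: b_def binomial_ring lessThan_Suc_atMost[symmetric] algebra_simps)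
    then have "gderiv (\<lambda>x. (x $ t) ^ m) ys = (\<lambda>x. \<Sum>k<m. b k * gderiv (\<lambda>x. (x $ t) ^ k) zs x)"
      by (simp add: ys gderiv_sum gderiv_cmult)
    also have "\<dots> = (\<lambda>x. 0)"
      using less len ys by (simp add: gdegree_le_def)
    finally show "gderiv (\<lambda>x. (x $ t) ^ m) ys = (\<lambda>x. 0)" .
  qed
qed

lemma gdegree_le_vinner_vpow: "gdegree_le i (\<lambda>x. vinner (vpow x i) v)"
  unfolding vinner_def vpow_def
  by (simp add: mult.commute[of _ "v $ _"] gdegree_le_sum gdegree_le_cmult gdegree_le_coordinate_power)

lemma sum_lists_length_Suc:
  "(\<Sum>ws\<in>{ws :: 'v::finite list. length ws = Suc k}. F ws) =
   (\<Sum>ys\<in>{ys. length ys = k}. \<Sum>z\<in>UNIV. F (ys @ [z]))"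
proof -
  have "(\<Sum>ys\<in>{ys. length ys = k}. \<Sum>z\<in>UNIV. F (ys @ [z])) =
        (\<Sum>(ys, z)\<in>{ys :: 'v list. length ys = k} \<times> UNIV. F (ys @ [z]))"
    by (rule sum.cartesian_product)
  also have "\<dots> = (\<Sum>ws\<in>{ws. length ws = Suc k}. F ws)"
  proof (rule sum.reindex_bij_witness[of _ "\<lambda>ws. (butlast ws, last ws)" "\<lambda>(ys, z). ys @ [z]"])
    fix ws :: "'v list"
    assume "ws \<in> {ws. length ws = Suc k}"
    then show "(case (butlast ws, last ws) of (ys, z) \<Rightarrow> ys @ [z]) = ws"
      by (cases ws rule: rev_cases) auto
  qed auto
  finally show ?thesis ..
qed

lemma gowers_avg_eq_sum_char_sum:
  "gowers_avg k (g :: 'p::prime_card mod_ring ^ 'n::finite \<Rightarrow> _) =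
   (\<Sum>ys\<in>{ys. length ys = k}. char_sum (gderiv g ys)) / of_nat (CARD('p mod_ring ^ 'n) ^ (k + 1))"
  unfolding gowers_avg_def char_sum_def by (subst sum.swap) (rule refl)

lemma gowers_avg_0:
  "gowers_avg 0 (g :: 'p::prime_card mod_ring ^ 'n::finite \<Rightarrow> _) =
   char_sum g / of_nat CARD('p mod_ring ^ 'n)"
  unfolding gowers_avg_eq_sum_char_sum by (simp add: length_0_conv[abs_def])

lemma char_sum_gderiv_snoc:
  "(\<Sum>z\<in>UNIV. char_sum (gderiv g (ys @ [z]))) = of_real ((cmod (char_sum (gderiv g ys)))\<^sup>2)"
proof -
  define e where "e x = echar (gderiv g ys x)" for x
  have "(\<Sum>z\<in>UNIV. char_sum (gderiv g (ys @ [z]))) = (\<Sum>x\<in>UNIV. \<Sum>z\<in>UNIV. e (x + z) * cnj (e x))"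
    unfolding char_sum_def e_def by (subst sum.swap) (simp add: gderiv_append echar_diff)
  also have "\<dots> = (\<Sum>x\<in>UNIV. (\<Sum>w\<in>UNIV. e w) * cnj (e x))"
  proof -
    have "(\<Sum>z\<in>UNIV. e (x + z)) = (\<Sum>w\<in>UNIV. e w)" for x
      by (rule sum.reindex_bij_witness[of _ "\<lambda>w. w - x" "\<lambda>z. x + z"]) auto
    then show ?thesis
      by (simp add: sum_distrib_right[symmetric])
  qed
  also have "\<dots> = char_sum (gderiv g ys) * cnj (char_sum (gderiv g ys))"
    unfolding char_sum_def e_def by (simp add: sum_distrib_left)
  finally show ?thesis
    by (simp only: complex_norm_square)
qed

lemma gowers_avg_Suc_ge:
  "(cmod (gowers_avg k g))\<^sup>2 \<le> Re (gowers_avg (Suc k) (g :: 'p::prime_card mod_ring ^ 'n::finite \<Rightarrow> _))"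
proof -
  let ?L = "{ys :: ('p mod_ring ^ 'n) list. length ys = k}"
  define V where "V = real CARD('p mod_ring ^ 'n)"
  define s where "s ys = cmod (char_sum (gderiv g ys))" for ys
  have "V > 0"
    unfolding V_def by simp
  have "cmod (gowers_avg k g) \<le> (\<Sum>ys\<in>?L. s ys) / V ^ (k + 1)"
    unfolding gowers_avg_eq_sum_char_sum s_def V_def
    by (auto simp: norm_divide norm_mult norm_power intro!: divide_right_mono norm_sum)
  then have "(cmod (gowers_avg k g))\<^sup>2 \<le> (\<Sum>ys\<in>?L. s ys)\<^sup>2 / (V ^ (k + 1))\<^sup>2"
    by (simp add: power_mono flip: power_divide)
  also have "\<dots> \<le> (\<Sum>ys\<in>?L. (s ys)\<^sup>2) * V ^ k / (V ^ (k + 1))\<^sup>2"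
    using sum_squared_le_sum_of_squares[of s ?L]
    by (simp add: V_def card_lists_length_eq[of UNIV, simplified] divide_right_mono)
  also have "\<dots> = (\<Sum>ys\<in>?L. (s ys)\<^sup>2) / V ^ (k + 2)"
    using \<open>V > 0\<close> by (simp add: field_simps power2_eq_square)
  also have "\<dots> = Re (gowers_avg (Suc k) g)"
  proof -
    have "gowers_avg (Suc k) g = of_real ((\<Sum>ys\<in>?L. (s ys)\<^sup>2) / V ^ (k + 2))"
      unfolding gowers_avg_eq_sum_char_sum sum_lists_length_Suc char_sum_gderiv_snoc s_def V_def
      by simp
    then show ?thesis
      by simp
  qed
  finally show ?thesis .
qed

lemma gowers_avg_Suc_ge_bias:
  "cmod (gowers_avg 0 g) ^ 2 ^ Suc k \<le> Re (gowers_avg (Suc k) (g :: 'p::prime_card mod_ring ^ 'n::finite \<Rightarrow> _))"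
proof (induction k)
  case 0
  show ?case
    using gowers_avg_Suc_ge[of 0 g] by simp
next
  case (Suc k)
  have "cmod (gowers_avg 0 g) ^ 2 ^ Suc (Suc k) = (cmod (gowers_avg 0 g) ^ 2 ^ Suc k)\<^sup>2"
    by (simp add: power_mult[symmetric] mult.commute)
  also have "\<dots> \<le> (cmod (gowers_avg (Suc k) g))\<^sup>2"
    using Suc complex_Re_le_cmod by (intro power_mono) (auto intro: order_trans)
  also have "\<dots> \<le> Re (gowers_avg (Suc (Suc k)) g)"
    by (rule gowers_avg_Suc_ge)
  finally show ?case .
qed

lemma gowers_norm_ge_bias:
  "cmod (gowers_avg 0 g) \<le> gowers_norm (Suc k) (g :: 'p::prime_card mod_ring ^ 'n::finite \<Rightarrow> _)"
proof (cases "gowers_avg 0 g = 0")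
  case False
  let ?b = "cmod (gowers_avg 0 g)"
  have "?b = (?b ^ 2 ^ Suc k) powr (1 / 2 ^ Suc k)"
    using False by (simp add: powr_realpow[symmetric] powr_powr)
  also have "\<dots> \<le> gowers_norm (Suc k) g"
    unfolding gowers_norm_def using gowers_avg_Suc_ge_bias by (intro powr_mono2) auto
  finally show ?thesis .
qed (simp add: gowers_norm_def)

lemma gowers_norm_add_gdegree_le:
  assumes "gdegree_le k \<psi>"
  shows "gowers_norm (Suc k) (\<lambda>x. g x + \<psi> x) = gowers_norm (Suc k) g"
proof -
  have "gderiv (\<lambda>x. g x + \<psi> x) ys = gderiv g ys" if "length ys = Suc k" for ys
    using assms that unfolding gdegree_le_def gderiv_add by auto
  then show ?thesis
    unfolding gowers_norm_def gowers_avg_def by (intro arg_cong2[where f="(powr)"] refl) simp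
qed

lemma gowers_norm_ge_density_of_zero_set:
  fixes T :: "'q \<Rightarrow> 'p::prime_card mod_ring ^ 'n::finite \<Rightarrow> 'p mod_ring"
  assumes "finite I" and deg: "\<And>q. q \<in> I \<Longrightarrow> gdegree_le k (T q)"
    and const: "\<And>x. \<forall>q\<in>I. T q x = 0 \<Longrightarrow> f x = c"
  shows "real (card {x. \<forall>q\<in>I. T q x = 0}) / real CARD('p) ^ CARD('n) \<le> gowers_norm (Suc k) f"
proof -
  define \<psi> where "\<psi> a x = (\<Sum>q\<in>I. a q * T q x)" for a x
  obtain a where a: "real (card {x. \<forall>q\<in>I. T q x = 0}) \<le> cmod (char_sum (\<lambda>x. f x + \<psi> a x))"
    using exists_twisted_char_sum_ge[of I T f c] assms(1) const unfolding \<psi>_def by blast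
  have "real (card {x. \<forall>q\<in>I. T q x = 0}) / real CARD('p) ^ CARD('n)
        \<le> cmod (gowers_avg 0 (\<lambda>x. f x + \<psi> a x))"
    using a by (simp add: gowers_avg_0 norm_divide norm_power divide_right_mono)
  also have "\<dots> \<le> gowers_norm (Suc k) (\<lambda>x. f x + \<psi> a x)"
    by (rule gowers_norm_ge_bias)
  also have "\<dots> = gowers_norm (Suc k) f"
    unfolding \<psi>_def using deg by (intro gowers_norm_add_gdegree_le gdegree_le_sum gdegree_le_cmult)
  finally show ?thesis .
qed

theorem proposition2p8:
  fixes y :: "nat \<Rightarrow> nat \<Rightarrow> 'p::prime_card mod_ring ^ 'n::finite"
    and f :: "'p mod_ring ^ 'n \<Rightarrow> 'p mod_ring"
    and K :: nat and M :: "('p mod_ring ^ 'n) set"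
  assumes "K \<ge> 1"
    and "M = {x. \<forall>i\<in>{1..CARD('p) - 1}. \<forall>j\<in>{1..K}. vinner (vpow x i) (y i j) = 0}"
    and "\<exists>c. \<forall>x\<in>M. f x = c"
  shows "gowers_norm CARD('p) f \<ge> (real (card M) / real CARD('p) ^ CARD('n)) ^ 2"
proof -
  obtain c where c: "\<And>x. x \<in> M \<Longrightarrow> f x = c"
    using assms(3) by blast
  obtain k where k: "CARD('p) = Suc k"
    using prime_card[where 'a='p] prime_gt_0_nat gr0_implies_Suc by blast
  define I where "I = {1..k} \<times> {1..K}"
  define T where "T q x = vinner (vpow x (fst q)) (y (fst q) (snd q))" for q x
  define d where "d = real (card M) / real CARD('p) ^ CARD('n)"
  have M: "M = {x. \<forall>q\<in>I. T q x = 0}"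
    unfolding assms(2) I_def T_def k by auto
  have deg: "gdegree_le k (T q)" if "q \<in> I" for q
    using that unfolding T_def I_def by (intro gdegree_le_mono[OF gdegree_le_vinner_vpow]) auto
  have "d \<le> gowers_norm (Suc k) f"
    unfolding d_def M using deg c M
    by (intro gowers_norm_ge_density_of_zero_set[where c = c]) (auto simp: I_def)
  then have density: "d \<le> gowers_norm CARD('p) f"
    by (simp only: k)
  have "card M \<le> CARD('p mod_ring ^ 'n)"
    by (rule card_mono) auto
  then have "d \<le> 1" and "0 \<le> d"
    by (simp_all add: d_def)
  then have "d ^ 2 \<le> d"
    by (simp add: power2_eq_square mult_left_le)
  with density show ?thesis
    unfolding d_def by linarith
qed

end
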